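(* Define $L_0 = 0^+$ and $L_k = L_{k-1} \cup L_{k-1}\, k\, \{0,\ldots,k-1\}^*$ for $k \ge 1$. For all $k \ge 0$ and all $x \in \mathbb{N}^*$ we have $\mathrm{alt}_{L_k}(x) \le 2^{k+2}-2$. Moreover, regarding $L_k$ as a language over the alphabet $\{0,\ldots,k\}$, $V_{L_k}(n) \le (2^{k+3}\cdot(k+3)+1)\cdot\log n + c_k$ for all sufficiently large $n$, where $c_k$ depends only on $k$.
   Context: Words are over the (infinite) alphabet $\mathbb{N}$ for the first claim. For a language $L$ and $x=a_1\cdots a_n$, a position $1\le i\le n$ is an $L$-alternation point if exactly one of $a_i\cdots a_n$ and $a_{i+1}\cdots a_n$ belongs to $L$; $\mathrm{alt}_L(x)$ is their number. $\log x=\lfloor\log_2 x\rfloor$. Variable-size sliding window model over a finite alphabet $\Sigma$: a streaming algorithm is a deterministic (possibly infinite-state) automaton with an injective encoding $\mathrm{enc}$ of states into bit strings; over $\overline\Sigma=\Sigma\cup\{\downarrow\}$ define $\mathrm{wnd}(\varepsilon)=\varepsilon$, $\mathrm{wnd}(ub)=\mathrm{wnd}(u)b$ ($b\in\Sigma$), $\mathrm{wnd}(u\!\downarrow)=\varepsilon$ if $\mathrm{wnd}(u)=\varepsilon$, $\mathrm{wnd}(u\!\downarrow)=v$ if $\mathrm{wnd}(u)=bv$. A variable-size sliding window algorithm for $L$ accepts $\{w\in\overline\Sigma^*:\mathrm{wnd}(w)\in L\}$ with space complexity $v_\mathcal{A}(n)=\max\{|\mathrm{enc}(\mathcal{A}(u'))|:u'\text{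 prefix of }u,\ |\mathrm{wnd}(v)|\le n\text{ for all prefixes }v\text{ of }u\}$; $V_L(n)$ is the minimum of $v_\mathcal{A}(n)$ over all such algorithms. *)

theory Defs
  imports Complex_Main "HOL-Library.Extended_Nat" "HOL-Library.Sublist"
begin

fun Lk :: "nat \<Rightarrow> nat list set" where
  "Lk 0 = {w. w \<noteq> [] \<and> set w \<subseteq> {0}}"
| "Lk (Suc k) = Lk k \<union> {u @ [Suc k] @ v | u v. u \<in> Lk k \<and> set v \<subseteq> {0..k}}"

definition alt :: "'a list set \<Rightarrow> 'a list \<Rightarrow> nat" where
  "alt L x = card {i \<in> {1..length x}. (drop (i - 1) x \<in> L) \<noteq> (drop i x \<in> L)}"

datatype 'a wsym = Sym 'a | Pop

fun wnd_step :: "'a list \<Rightarrow> 'a wsym \<Rightarrow> 'a list" where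
  "wnd_step w (Sym b) = w @ [b]"
| "wnd_step w Pop = tl w"

definition wnd :: "'a wsym list \<Rightarrow> 'a list" where
  "wnd u = foldl wnd_step [] u"

definition ext_alph :: "'a set \<Rightarrow> 'a wsym set" where
  "ext_alph S = Sym ` S \<union> {Pop}"

text \<open>States are taken from the countable type bool list,
  which is no loss of generality (only countably many states are reachable).\<close>
record 'a stream_alg =
  init :: "bool list"
  delta :: "bool list \<Rightarrow> 'a wsym \<Rightarrow> bool list"
  final :: "bool list set"
  enc :: "bool list \<Rightarrow> bool list"

definition run :: "'a stream_alg \<Rightarrow> 'a wsym list \<Rightarrow> bool list" where
  "run A u = foldl (delta A) (init A) u"

definition is_sw_alg :: "'a set \<Rightarrow> 'a list set \<Rightarrow> 'a stream_alg \<Rightarrow> bool" where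
  "is_sw_alg \<Sigma> L A \<longleftrightarrow> inj (enc A) \<and>
     (\<forall>w \<in> lists (ext_alph \<Sigma>). run A w \<in> final A \<longleftrightarrow> wnd w \<in> L)"

definition space :: "'a set \<Rightarrow> 'a stream_alg \<Rightarrow> nat \<Rightarrow> enat" where
  "space \<Sigma> A n = Sup {enat (length (enc A (run A u'))) | u u'.
       u \<in> lists (ext_alph \<Sigma>) \<and> prefix u' u \<and>
       (\<forall>v. prefix v u \<longrightarrow> length (wnd v) \<le> n)}"

definition V :: "'a set \<Rightarrow> 'a list set \<Rightarrow> nat \<Rightarrow> enat" where
  "V \<Sigma> L n = Inf {space \<Sigma> A n | A. is_sw_alg \<Sigma> L A}"

end

theory Submission
  imports Defs
begin

text \<open>Alternations: split \<open>x\<close> at its last letter \<open>m > k\<close>, say \<open>x = u m v\<close>. Words over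
  \<open>{0..k}\<close> lie in \<open>L(k+1)\<close> iff they lie in \<open>L(k)\<close>, so \<open>v\<close> contributes at most
  \<open>alt L(k) v\<close> alternation points and the letter \<open>m\<close> at most one; a suffix \<open>u' m v\<close> lies in
  \<open>L(k+1)\<close> iff \<open>m = k+1\<close> and \<open>u' \<in> L(k)\<close>, so \<open>u\<close> contributes at most another
  \<open>alt L(k) u\<close>. Hence the bounds satisfy \<open>A(k+1) \<le> 2 A(k) + 1\<close>.

  Space: whether \<open>s a \<in> L(k)\<close> depends only on \<open>a\<close> and on the signature of \<open>s\<close>, i.e. the
  pair (\<open>s \<in> L(k)\<close>, largest letter of \<open>s\<close>). The algorithm stores the signatures of all
  nonempty suffixes of the window, run-length encoded. Along the suffixes the membership bit
  changes at most \<open>2^(k+2) - 2\<close> times and the largest letter is antitone with values in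
  \<open>{0..k}\<close>, so there are at most \<open>2^(k+2) + k\<close> runs, each written with \<open>O(log n + k)\<close> bits.\<close>

section \<open>Alternation points of the languages L(k)\<close>

lemma alt_Nil [simp]: "alt L [] = 0"
  by (simp add: alt_def)

lemma Collect_atLeastAtMost_Suc_split:
  "{i \<in> {1..Suc n}. Q i} = {i \<in> {1}. Q i} \<union> Suc ` {j \<in> {1..n}. Q (Suc j)}"
proof (rule set_eqI)
  fix i
  show "i \<in> {i \<in> {1..Suc n}. Q i} \<longleftrightarrow> i \<in> {i \<in> {1}. Q i} \<union> Suc ` {j \<in> {1..n}. Q (Suc j)}"
    by (cases i) auto
qed

lemma alt_Cons: "alt L (a # x) = alt L x + (if (a # x \<in> L) = (x \<in> L) then 0 else 1)"
proof -
  let ?Q = "\<lambda>i. (drop (i - 1) (a # x) \<in> L) \<noteq> (drop i (a # x) \<in> L)"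
  have "{j \<in> {1..length x}. ?Q (Suc j)} = {j \<in> {1..length x}. (drop (j - 1) x \<in> L) \<noteq> (drop j x \<in> L)}"
    by (auto simp: drop_Cons')
  moreover have "card ({i \<in> {1}. ?Q i} \<union> Suc ` {j \<in> {1..length x}. ?Q (Suc j)})
      = card {i \<in> {1}. ?Q i} + card {j \<in> {1..length x}. ?Q (Suc j)}"
    by (subst card_Un_disjoint) (auto simp: card_image)
  moreover have "{i \<in> {1}. ?Q i} = (if (a # x \<in> L) = (x \<in> L) then {} else {1})"
    by auto
  ultimately show ?thesis
    unfolding alt_def length_Cons Collect_atLeastAtMost_Suc_split by simp
qed

lemma alt_append: "alt L (u @ v) = alt {w. w @ v \<in> L} u + alt L v"
  by (induction u) (simp_all add: alt_Cons)

lemma alt_cong: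
  assumes "\<And>s. suffix s x \<Longrightarrow> s \<in> L \<longleftrightarrow> s \<in> L'"
  shows "alt L x = alt L' x"
  unfolding alt_def using assms suffix_drop by metis

lemma alt_empty [simp]: "alt {} x = 0"
  by (simp add: alt_def)

lemma alt_nonempty_words_le: "alt {w. w \<noteq> []} x \<le> 1"
  by (induction x) (auto simp: alt_Cons)

lemma Lk_subset: "w \<in> Lk k \<Longrightarrow> w \<noteq> [] \<and> set w \<subseteq> {0..k}"
  by (induction k arbitrary: w) fastforce+

lemma Lk_Suc_iff: "set w \<subseteq> {0..k} \<Longrightarrow> w \<in> Lk (Suc k) \<longleftrightarrow> w \<in> Lk k"
  by auto

lemma append_Suc_Cons_in_Lk_Suc_iff:
  assumes "set v \<subseteq> {0..k}"
  shows "u @ Suc k # v \<in> Lk (Suc k) \<longleftrightarrow> u \<in> Lk k"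
proof
  assume "u @ Suc k # v \<in> Lk (Suc k)"
  then consider "u @ Suc k # v \<in> Lk k"
    | u' v' where "u @ Suc k # v = u' @ Suc k # v'" "u' \<in> Lk k" "set v' \<subseteq> {0..k}"
    by auto
  then show "u \<in> Lk k"
  proof cases
    case 1
    then show ?thesis using Lk_subset by fastforce
  next
    case 2
    have "Suc k \<notin> set u'" "Suc k \<notin> set v'"
      using 2(2,3) Lk_subset by fastforce+
    then have "u = u'"
      using 2(1) append_Cons_eq_iff by metis
    then show ?thesis using 2(2) by simp
  qed
qed (use assms in auto)

lemma alt_append_Cons_le: "alt L (u @ m # v) \<le> alt {w. w @ m # v \<in> L} u + alt L v + 1"
  by (simp add: alt_append alt_Cons)

lemma alt_Lk_0_le: "alt (Lk 0) x \<le> 2"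
proof (cases "\<exists>m \<in> set x. 0 < m")
  case False
  then have "alt (Lk 0) x = alt {w. w \<noteq> []} x"
    by (intro alt_cong) (auto dest!: set_mono_suffix)
  then show ?thesis using alt_nonempty_words_le[of x] by simp
next
  case True
  then obtain u m v where x: "x = u @ m # v" "0 < m" "\<forall>a \<in> set v. \<not> 0 < a"
    by (rule split_list_last_propE)
  have "{w. w @ m # v \<in> Lk 0} = {}"
    using x(2) by auto
  moreover have "alt (Lk 0) v = alt {w. w \<noteq> []} v"
    using x(3) by (intro alt_cong) (auto dest!: set_mono_suffix)
  ultimately show ?thesis
    using alt_nonempty_words_le[of v] alt_append_Cons_le[of "Lk 0" u m v]
    unfolding x(1) by (simp del: Lk.simps)
qed

lemma alt_Lk_Suc_le:
  assumes "\<And>y. alt (Lk k) y \<le> A"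
  shows "alt (Lk (Suc k)) x \<le> 2 * A + 1"
proof (cases "\<exists>m \<in> set x. k < m")
  case False
  then have "alt (Lk (Suc k)) x = alt (Lk k) x"
    by (intro alt_cong Lk_Suc_iff) (auto dest!: set_mono_suffix simp: not_less)
  then show ?thesis using assms[of x] by simp
next
  case True
  then obtain u m v where x: "x = u @ m # v" "k < m" "\<forall>a \<in> set v. \<not> k < a"
    by (rule split_list_last_propE)
  have v: "set v \<subseteq> {0..k}"
    using x(3) by auto
  have "alt {w. w @ m # v \<in> Lk (Suc k)} u \<le> A"
  proof (cases "m = Suc k")
    case True
    then have "{w. w @ m # v \<in> Lk (Suc k)} = Lk k"
      using append_Suc_Cons_in_Lk_Suc_iff[OF v] by blast
    then show ?thesis using assms by simp
  next
    case False
    then have "{w. w @ m # v \<in> Lk (Suc k)} = {}"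
      using x(2) Lk_subset by fastforce
    then show ?thesis by (simp del: Lk.simps)
  qed
  moreover have "alt (Lk (Suc k)) v = alt (Lk k) v"
    using v by (intro alt_cong Lk_Suc_iff) (auto dest!: set_mono_suffix)
  ultimately show ?thesis
    using assms[of v] alt_append_Cons_le[of "Lk (Suc k)" u m v] unfolding x(1) by linarith
qed

theorem alt_Lk_le: "alt (Lk k) x \<le> 2 ^ (k + 2) - 2"
proof (induction k arbitrary: x)
  case 0
  then show ?case using alt_Lk_0_le by simp
next
  case (Suc k)
  have "(2::nat) ^ (k + 2) = 4 * 2 ^ k" "(2::nat) ^ (Suc k + 2) = 8 * 2 ^ k"
    by simp_all
  then have "2 * (2 ^ (k + 2) - 2) + 1 \<le> (2::nat) ^ (Suc k + 2) - 2"
    using one_le_power[of "2::nat" k] by linarith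
  then show ?case
    using alt_Lk_Suc_le[OF Suc.IH, of x] by linarith
qed

section \<open>Signatures of the suffixes of a window\<close>

fun max_letter :: "nat list \<Rightarrow> nat" where
  "max_letter [] = 0"
| "max_letter (a # w) = max a (max_letter w)"

lemma max_letter_le_iff: "max_letter w \<le> m \<longleftrightarrow> (\<forall>a \<in> set w. a \<le> m)"
  by (induction w) auto

lemma max_letter_snoc: "max_letter (w @ [a]) = max (max_letter w) a"
  by (induction w) auto

lemma max_letter_in_Lk_Suc:
  assumes "u @ Suc k # v \<in> Lk (Suc k)"
  shows "max_letter (u @ Suc k # v) = Suc k"
  using Lk_subset[OF assms] max_letter_le_iff[of "u @ Suc k # v"]
  by (metis atLeastAtMost_iff in_set_conv_decomp le_antisym order_refl subset_iff)

lemma single_in_Lk_iff: "[a] \<in> Lk k \<longleftrightarrow> a = 0"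
  by (induction k) (auto simp: Cons_eq_append_conv dest: Lk_subset)

lemma snoc_in_LkD:
  assumes "w @ [a] \<in> Lk k" "w \<noteq> []"
  shows "w \<in> Lk k \<and> a \<le> k \<and> (a \<noteq> max_letter w \<or> a = 0)"
  using assms
proof (induction k arbitrary: w)
  case 0
  then show ?case by (auto simp: max_letter_le_iff)
next
  case (Suc k)
  from Suc.prems(1) consider "w @ [a] \<in> Lk k"
    | u v where "w @ [a] = u @ Suc k # v" "u \<in> Lk k" "set v \<subseteq> {0..k}"
    by auto
  then show ?case
  proof cases
    case 1
    then show ?thesis using Suc.IH[OF 1 Suc.prems(2)] by simp
  next
    case 2
    show ?thesis
    proof (cases v rule: rev_cases)
      case Nil
      with 2 have "w = u" "a = Suc k"
        by auto
      moreover have "max_letter u \<le> k"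
        using Lk_subset[OF 2(2)] by (auto simp: max_letter_le_iff)
      ultimately show ?thesis using 2(2) by auto
    next
      case (snoc v' b)
      with 2 have w: "w = u @ Suc k # v'" and "a = b" "b \<le> k"
        by auto
      then have "w \<in> Lk (Suc k)"
        using 2 snoc by auto
      with w have "max_letter w = Suc k"
        using max_letter_in_Lk_Suc by blast
      then show ?thesis using \<open>w \<in> Lk (Suc k)\<close> \<open>a = b\<close> \<open>b \<le> k\<close> by auto
    qed
  qed
qed

lemma snoc_in_LkI:
  assumes "w \<in> Lk k" "a \<le> k" "a \<noteq> max_letter w \<or> a = 0"
  shows "w @ [a] \<in> Lk k"
  using assms
proof (induction k arbitrary: w)
  case 0
  then show ?case by auto
next
  case (Suc k)
  from Suc.prems(1) consider "w \<in> Lk k"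
    | u v where "w = u @ Suc k # v" "u \<in> Lk k" "set v \<subseteq> {0..k}"
    by auto
  then show ?case
  proof cases
    case 1
    show ?thesis
    proof (cases "a = Suc k")
      case True
      then have "w @ [a] = w @ [Suc k] @ [] \<and> w \<in> Lk k \<and> set [] \<subseteq> {0..k}"
        using 1 by simp
      then show ?thesis by (simp only: Lk.simps) blast
    next
      case False
      then have "w @ [a] \<in> Lk k"
        using Suc.IH[OF 1] Suc.prems(2,3) by simp
      then show ?thesis by simp
    qed
  next
    case 2
    then have "max_letter w = Suc k"
      using Suc.prems(1) max_letter_in_Lk_Suc by blast
    then have "a \<le> k"
      using Suc.prems by auto
    then have "w @ [a] = u @ [Suc k] @ (v @ [a]) \<and> u \<in> Lk k \<and> set (v @ [a]) \<subseteq> {0..k}"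
      using 2 by auto
    then show ?thesis by (simp only: Lk.simps) blast
  qed
qed

lemma snoc_in_Lk_iff:
  "w \<noteq> [] \<Longrightarrow> w @ [a] \<in> Lk k \<longleftrightarrow> w \<in> Lk k \<and> a \<le> k \<and> (a \<noteq> max_letter w \<or> a = 0)"
  by (metis snoc_in_LkD snoc_in_LkI)

fun changes :: "'a list \<Rightarrow> nat" where
  "changes (x # y # zs) = (if x = y then 0 else 1) + changes (y # zs)"
| "changes _ = 0"

lemma changes_map_pair_le:
  "changes (map (\<lambda>x. (f x, g x)) xs) \<le> changes (map f xs) + changes (map g xs)"
  by (induction xs rule: induct_list012) auto

lemma changes_le_hd_if_antitone:
  fixes xs :: "nat list"
  shows "sorted_wrt (\<ge>) (x # xs) \<Longrightarrow> changes (x # xs) \<le> x"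
  by (induction xs arbitrary: x) fastforce+

fun nonempty_suffixes :: "'a list \<Rightarrow> 'a list list" where
  "nonempty_suffixes [] = []"
| "nonempty_suffixes (a # w) = (a # w) # nonempty_suffixes w"

lemma nonempty_suffixes_snoc:
  "nonempty_suffixes (w @ [a]) = map (\<lambda>s. s @ [a]) (nonempty_suffixes w) @ [[a]]"
  by (induction w) auto

lemma nonempty_suffixes_tl: "nonempty_suffixes (tl w) = tl (nonempty_suffixes w)"
  by (cases w) auto

lemma in_set_nonempty_suffixesD: "s \<in> set (nonempty_suffixes w) \<Longrightarrow> s \<noteq> [] \<and> set s \<subseteq> set w"
  by (induction w) auto

lemma length_nonempty_suffixes [simp]: "length (nonempty_suffixes w) = length w"
  by (induction w) auto

lemma changes_suffix_membership_le_alt: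
  "changes (map (\<lambda>s. s \<in> L) (nonempty_suffixes w)) \<le> alt L w"
proof (induction w)
  case (Cons a w)
  then show ?case by (cases w) (auto simp: alt_Cons)
qed simp

lemma antitone_max_letter_suffixes: "sorted_wrt (\<ge>) (map max_letter (nonempty_suffixes w))"
proof (induction w)
  case (Cons a w)
  have "max_letter s \<le> max_letter (a # w)" if "s \<in> set (nonempty_suffixes w)" for s
    using in_set_nonempty_suffixesD[OF that] max_letter_le_iff[of "a # w"] max_letter_le_iff[of s]
    by (meson order_refl set_subset_Cons subset_iff)
  with Cons show ?case by auto
qed simp

definition sig :: "nat \<Rightarrow> nat list \<Rightarrow> bool \<times> nat" where
  "sig k w = (w \<in> Lk k, max_letter w)"

fun sig_step :: "nat \<Rightarrow> nat \<Rightarrow> bool \<times> nat \<Rightarrow> bool \<times> nat" where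
  "sig_step k a (b, m) = (b \<and> a \<le> k \<and> (a \<noteq> m \<or> a = 0), max m a)"

lemma sig_snoc: "w \<noteq> [] \<Longrightarrow> sig k (w @ [a]) = sig_step k a (sig k w)"
  by (simp add: sig_def snoc_in_Lk_iff max_letter_snoc)

definition window_sigs :: "nat \<Rightarrow> nat list \<Rightarrow> (bool \<times> nat) list" where
  "window_sigs k w = map (sig k) (nonempty_suffixes w)"

lemma window_sigs_snoc:
  "window_sigs k (w @ [a]) = map (sig_step k a) (window_sigs k w) @ [(a = 0, a)]"
proof -
  have "map (\<lambda>s. sig k (s @ [a])) (nonempty_suffixes w) = map (sig_step k a \<circ> sig k) (nonempty_suffixes w)"
    by (rule map_cong) (auto simp: sig_snoc dest: in_set_nonempty_suffixesD)
  moreover have "sig k [a] = (a = 0, a)"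
    by (simp add: sig_def single_in_Lk_iff)
  ultimately show ?thesis
    by (simp add: window_sigs_def nonempty_suffixes_snoc)
qed

lemma window_sigs_wnd_step:
  "window_sigs k w = window_sigs k w' \<Longrightarrow>
   window_sigs k (wnd_step w x) = window_sigs k (wnd_step w' x)"
  by (cases x) (simp add: window_sigs_snoc, simp add: window_sigs_def nonempty_suffixes_tl map_tl)

lemma in_Lk_iff_window_sigs: "w \<in> Lk k \<longleftrightarrow> window_sigs k w \<noteq> [] \<and> fst (hd (window_sigs k w))"
  by (cases w) (auto simp: window_sigs_def sig_def dest: Lk_subset)

lemma changes_window_sigs_le:
  assumes "set w \<subseteq> {0..k}"
  shows "changes (window_sigs k w) \<le> 2 ^ (k + 2) - 2 + k"
proof -
  have "changes (window_sigs k w) \<le> changes (map (\<lambda>s. s \<in> Lk k) (nonempty_suffixes w))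
      + changes (map max_letter (nonempty_suffixes w))"
    using changes_map_pair_le unfolding window_sigs_def sig_def by (metis (no_types) map_map comp_def)
  moreover have "changes (map max_letter (nonempty_suffixes w)) \<le> k"
  proof (cases w)
    case (Cons a v)
    then have "changes (map max_letter (nonempty_suffixes w)) \<le> max_letter w"
      using changes_le_hd_if_antitone antitone_max_letter_suffixes[of w] by simp
    also have "\<dots> \<le> k"
      using assms max_letter_le_iff by auto
    finally show ?thesis .
  qed simp
  ultimately show ?thesis
    using changes_suffix_membership_le_alt[of "Lk k" w] alt_Lk_le[of k w] by linarith
qed

section \<open>Run-length and binary encodings\<close>

fun rle :: "'a list \<Rightarrow> ('a \<times> nat) list" where
  "rle [] = []"
| "rle (x # xs) = (case rle xs of
      [] \<Rightarrow> [(x, 1)]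
    | (y, c) # r \<Rightarrow> if x = y then (y, Suc c) # r else (x, 1) # (y, c) # r)"

definition unrle :: "('a \<times> nat) list \<Rightarrow> 'a list" where
  "unrle ps = concat (map (\<lambda>(x, c). replicate c x) ps)"

lemma unrle_rle: "unrle (rle xs) = xs"
  by (induction xs) (auto simp: unrle_def split: list.split)

lemma length_unrle: "length (unrle ps) = sum_list (map snd ps)"
  by (induction ps) (auto simp: unrle_def)

lemma map_fst_rle: "map fst (rle xs) = remdups_adj xs"
  by (induction xs) (auto simp: remdups_adj_Cons split: list.split)

lemma length_remdups_adj_le: "length (remdups_adj xs) \<le> Suc (changes xs)"
  by (induction xs rule: changes.induct) auto

lemma in_set_rleD: "(x, c) \<in> set (rle xs) \<Longrightarrow> x \<in> set xs \<and> c \<le> length xs"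
proof
  assume "(x, c) \<in> set (rle xs)"
  then have "x \<in> set (map fst (rle xs))"
    by force
  then show "x \<in> set xs"
    by (simp add: map_fst_rle)
  have "c \<le> sum_list (map snd (rle xs))"
    using \<open>(x, c) \<in> set (rle xs)\<close> by (force intro: member_le_sum_list)
  then show "c \<le> length xs"
    using length_unrle[of "rle xs"] by (simp add: unrle_rle)
qed

fun bits :: "nat \<Rightarrow> bool list" where
  "bits m = (if m < 2 then [odd m] else odd m # bits (m div 2))"

declare bits.simps [simp del]

lemma bits_less_2: "m < 2 \<Longrightarrow> bits m = [odd m]"
  and bits_ge_2: "\<not> m < 2 \<Longrightarrow> bits m = odd m # bits (m div 2)"
  by (subst bits.simps, simp)+

fun from_bits :: "bool list \<Rightarrow> nat" where
  "from_bits [] = 0"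
| "from_bits (b # bs) = of_bool b + 2 * from_bits bs"

lemma from_bits_bits: "from_bits (bits m) = m"
proof (induction m rule: bits.induct)
  case (1 m)
  show ?case
  proof (cases "m < 2")
    case True
    then have "m = 0 \<or> m = 1"
      by auto
    then show ?thesis by (auto simp: bits_less_2 bits_ge_2)
  next
    case False
    with 1 show ?thesis by (simp add: bits_less_2 bits_ge_2)
  qed
qed

lemma bits_ne_Nil: "bits m \<noteq> []"
  by (cases "m < 2") (simp_all add: bits_less_2 bits_ge_2)

lemma length_bits_le: "length (bits m) \<le> Suc m"
proof (induction m rule: bits.induct)
  case (1 m)
  then show ?case by (cases "m < 2") (auto simp: bits_less_2 bits_ge_2)
qed

lemma two_power_length_bits_le: "2 ^ (length (bits m) - 1) \<le> max m 1"
proof (induction m rule: bits.induct)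
  case (1 m)
  show ?case
  proof (cases "m < 2")
    case False
    then have "length (bits m) - 1 = Suc (length (bits (m div 2)) - 1)"
      using bits_ne_Nil[of "m div 2"] by (simp add: bits_less_2 bits_ge_2)
    then have "2 ^ (length (bits m) - 1) = 2 * 2 ^ (length (bits (m div 2)) - 1)"
      by simp
    also have "\<dots> \<le> 2 * (m div 2)"
      using 1 False by simp
    finally show ?thesis by simp
  qed (simp add: bits_less_2 bits_ge_2)
qed

lemma length_bits_le_log:
  assumes "m \<le> n" "1 \<le> n"
  shows "length (bits m) \<le> nat \<lfloor>log 2 (real n)\<rfloor> + 1"
proof -
  have "(2::real) ^ (length (bits m) - 1) \<le> real n"
    using two_power_length_bits_le[of m] assms by (simp add: max_def split: if_splits)
  then have "real (length (bits m) - 1) \<le> log 2 (real n)"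
    using assms by (intro le_log_of_power) auto
  then show ?thesis
    by linarith
qed

text \<open>Each bit is followed by a flag telling whether more bits follow, which makes the code
  self-delimiting.\<close>

fun delimit :: "bool list \<Rightarrow> bool list" where
  "delimit [] = []"
| "delimit [b] = [b, False]"
| "delimit (b # c # bs) = b # True # delimit (c # bs)"

fun undelimit :: "bool list \<Rightarrow> bool list \<times> bool list" where
  "undelimit (b # True # r) = (let (bs, r') = undelimit r in (b # bs, r'))"
| "undelimit (b # False # r) = ([b], r)"
| "undelimit r = ([], r)"

lemma undelimit_delimit: "bs \<noteq> [] \<Longrightarrow> undelimit (delimit bs @ r) = (bs, r)"
  by (induction bs rule: delimit.induct) auto

lemma length_delimit: "length (delimit bs) = 2 * length bs"
  by (induction bs rule: delimit.induct) auto

fun encode_run :: "(bool \<times> nat) \<times> nat \<Rightarrow> bool list" where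
  "encode_run ((b, m), c) = b # delimit (bits m) @ delimit (bits c)"

fun decode_run :: "bool list \<Rightarrow> ((bool \<times> nat) \<times> nat) \<times> bool list" where
  "decode_run (b # r) =
     (let (bm, r1) = undelimit r; (bc, r2) = undelimit r1 in (((b, from_bits bm), from_bits bc), r2))"
| "decode_run [] = undefined"

lemma decode_encode_run: "decode_run (encode_run p @ r) = (p, r)"
  by (cases p) (auto simp: undelimit_delimit[OF bits_ne_Nil] from_bits_bits)

lemma encode_run_ne_Nil: "encode_run p \<noteq> []"
  by (metis encode_run.simps list.distinct(1) prod.collapse)

lemma encode_run_append_eq_imp_eq:
  "encode_run p @ r = encode_run p' @ r' \<Longrightarrow> p = p' \<and> r = r'"
  by (metis decode_encode_run prod.inject)

lemma length_encode_run:
  "length (encode_run ((b, m), c)) = 1 + 2 * length (bits m) + 2 * length (bits c)"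
  by (simp add: length_delimit)

lemma concat_map_injective:
  assumes "\<And>x. f x \<noteq> []" and "\<And>x y r r'. f x @ r = f y @ r' \<Longrightarrow> x = y \<and> r = r'"
  shows "concat (map f xs) = concat (map f ys) \<Longrightarrow> xs = ys"
proof (induction xs arbitrary: ys)
  case Nil
  then show ?case using assms(1) by (cases ys) auto
next
  case (Cons x xs)
  then obtain y ys' where ys: "ys = y # ys'"
    using assms(1) by (cases ys) auto
  with Cons.prems have "f x @ concat (map f xs) = f y @ concat (map f ys')"
    by simp
  then show ?case
    using assms(2) Cons.IH ys by blast
qed

lemma length_concat_map_le:
  "(\<And>x. x \<in> set xs \<Longrightarrow> length (f x) \<le> M) \<Longrightarrow> length (concat (map f xs)) \<le> length xs * M"
  by (induction xs) (auto simp: add_mono)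

definition Lk_state :: "nat \<Rightarrow> nat list \<Rightarrow> bool list" where
  "Lk_state k w = concat (map encode_run (rle (window_sigs k w)))"

lemma Lk_state_eq_imp_window_sigs_eq:
  assumes "Lk_state k w = Lk_state k w'"
  shows "window_sigs k w = window_sigs k w'"
proof -
  have "rle (window_sigs k w) = rle (window_sigs k w')"
    using assms concat_map_injective[of encode_run, OF encode_run_ne_Nil encode_run_append_eq_imp_eq]
    unfolding Lk_state_def by blast
  then show ?thesis
    by (metis unrle_rle)
qed

lemma length_Lk_state_le:
  assumes "set w \<subseteq> {0..k}" "length w \<le> n" "1 \<le> n"
  shows "length (Lk_state k w) \<le> (2 ^ (k + 2) + k) * (2 * nat \<lfloor>log 2 (real n)\<rfloor> + 2 * k + 5)"
proof -
  have "length (encode_run p) \<le> 2 * nat \<lfloor>log 2 (real n)\<rfloor> + 2 * k + 5"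
    if "p \<in> set (rle (window_sigs k w))" for p
  proof -
    obtain b m c where p: "p = ((b, m), c)"
      by (metis prod.collapse)
    with that have "(b, m) \<in> set (window_sigs k w)" "c \<le> n"
      using in_set_rleD assms(2) by (fastforce simp: window_sigs_def)+
    then obtain s where "s \<in> set (nonempty_suffixes w)" "m = max_letter s"
      by (auto simp: window_sigs_def sig_def)
    then have "m \<le> k"
      using assms(1) in_set_nonempty_suffixesD max_letter_le_iff by fastforce
    then show ?thesis
      using length_bits_le[of m] length_bits_le_log[OF \<open>c \<le> n\<close> assms(3)]
      unfolding p length_encode_run by linarith
  qed
  then have "length (Lk_state k w)
      \<le> length (rle (window_sigs k w)) * (2 * nat \<lfloor>log 2 (real n)\<rfloor> + 2 * k + 5)"
    unfolding Lk_state_def by (rule length_concat_map_le)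
  also have "\<dots> \<le> (2 ^ (k + 2) + k) * (2 * nat \<lfloor>log 2 (real n)\<rfloor> + 2 * k + 5)"
  proof (rule mult_right_mono)
    have "length (rle (window_sigs k w)) \<le> Suc (changes (window_sigs k w))"
      using length_remdups_adj_le by (metis length_map map_fst_rle)
    moreover have "(2::nat) \<le> 2 ^ (k + 2)"
      using power_increasing[of 1 "k + 2" "2::nat"] by simp
    ultimately show "length (rle (window_sigs k w)) \<le> 2 ^ (k + 2) + k"
      using changes_window_sigs_le[OF assms(1)] by linarith
  qed simp
  finally show ?thesis .
qed

section \<open>Sliding-window algorithms from congruent window encodings\<close>

text \<open>\<open>SOME\<close> picks an arbitrary window with the current state; because equal states stay equal
  under every window update, the choice does not matter.\<close>

definition state_alg :: "('a list \<Rightarrow> bool list) \<Rightarrow> 'a list set \<Rightarrow> 'a stream_alg" where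
  "state_alg st L = \<lparr>init = st [], delta = (\<lambda>s x. st (wnd_step (SOME w. st w = s) x)),
     final = st ` L, enc = id\<rparr>"

lemma run_state_alg:
  assumes "\<And>w w' x. st w = st w' \<Longrightarrow> st (wnd_step w x) = st (wnd_step w' x)"
  shows "run (state_alg st L) u = st (wnd u)"
proof (induction u rule: rev_induct)
  case Nil
  then show ?case by (simp add: run_def wnd_def state_alg_def)
next
  case (snoc x u)
  have "run (state_alg st L) (u @ [x]) = st (wnd_step (SOME w. st w = st (wnd u)) x)"
    using snoc by (simp add: run_def state_alg_def)
  also have "\<dots> = st (wnd_step (wnd u) x)"
    by (rule assms) (rule someI, rule refl)
  also have "\<dots> = st (wnd (u @ [x]))"
    by (simp add: wnd_def)
  finally show ?case .
qed

lemma is_sw_alg_state_alg: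
  assumes "\<And>w w' x. st w = st w' \<Longrightarrow> st (wnd_step w x) = st (wnd_step w' x)"
    and "\<And>w w'. st w = st w' \<Longrightarrow> w \<in> L \<Longrightarrow> w' \<in> L"
  shows "is_sw_alg \<Sigma> L (state_alg st L)"
  unfolding is_sw_alg_def
proof (intro conjI ballI)
  fix u
  have "run (state_alg st L) u = st (wnd u)"
    using assms(1) by (rule run_state_alg)
  then have "run (state_alg st L) u \<in> final (state_alg st L) \<longleftrightarrow> st (wnd u) \<in> st ` L"
    by (simp add: state_alg_def)
  also have "\<dots> \<longleftrightarrow> wnd u \<in> L"
    using assms(2) by (metis image_eqI imageE)
  finally show "run (state_alg st L) u \<in> final (state_alg st L) \<longleftrightarrow> wnd u \<in> L" .
qed (simp add: state_alg_def)

lemma set_wnd_subset: "u \<in> lists (ext_alph \<Sigma>) \<Longrightarrow> set (wnd u) \<subseteq> \<Sigma>"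
proof (induction u rule: rev_induct)
  case (snoc x u)
  then have "set (wnd_step (wnd u) x) \<subseteq> \<Sigma>"
    by (cases x; cases "wnd u") (auto simp: ext_alph_def)
  then show ?case
    by (simp add: wnd_def)
qed (simp add: wnd_def)

lemma V_le_state_length:
  fixes st :: "'a list \<Rightarrow> bool list"
  assumes "\<And>w w' x. st w = st w' \<Longrightarrow> st (wnd_step w x) = st (wnd_step w' x)"
    and "\<And>w w'. st w = st w' \<Longrightarrow> w \<in> L \<Longrightarrow> w' \<in> L"
    and "\<And>w. set w \<subseteq> \<Sigma> \<Longrightarrow> length w \<le> n \<Longrightarrow> length (st w) \<le> M"
  shows "V \<Sigma> L n \<le> enat M"
proof -
  have run: "run (state_alg st L) u = st (wnd u)" for u
    using assms(1) by (rule run_state_alg)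
  have enc: "enc (state_alg st L) = id"
    by (simp add: state_alg_def)
  have "V \<Sigma> L n \<le> space \<Sigma> (state_alg st L) n"
  proof -
    have "is_sw_alg \<Sigma> L (state_alg st L)"
      using assms(1,2) by (rule is_sw_alg_state_alg)
    then show ?thesis
      unfolding V_def by (blast intro: Inf_lower)
  qed
  also have "\<dots> \<le> enat M"
    unfolding space_def
  proof (rule Sup_least)
    fix y
    assume "y \<in> {enat (length (enc (state_alg st L) (run (state_alg st L) u'))) | u u'.
      u \<in> lists (ext_alph \<Sigma>) \<and> prefix u' u \<and> (\<forall>v. prefix v u \<longrightarrow> length (wnd v) \<le> n)}"
    then obtain u u' where y: "y = enat (length (st (wnd u')))"
      and u: "u \<in> lists (ext_alph \<Sigma>)" "prefix u' u" "\<forall>v. prefix v u \<longrightarrow> length (wnd v) \<le> n"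
      by (auto simp: run enc)
    have "set (wnd u') \<subseteq> \<Sigma>"
      using u(1,2) set_wnd_subset set_mono_prefix by blast
    then show "y \<le> enat M"
      using u(2,3) assms(3) unfolding y by simp
  qed
  finally show ?thesis .
qed

lemma V_Lk_le:
  assumes "1 \<le> n"
  shows "V {0..k} (Lk k) n \<le> enat ((2 ^ (k + 2) + k) * (2 * nat \<lfloor>log 2 (real n)\<rfloor> + 2 * k + 5))"
proof (rule V_le_state_length)
  show "Lk_state k (wnd_step w x) = Lk_state k (wnd_step w' x)" if "Lk_state k w = Lk_state k w'"
    for w w' :: "nat list" and x
    using window_sigs_wnd_step[OF Lk_state_eq_imp_window_sigs_eq[OF that]]
    by (simp add: Lk_state_def)
  show "w' \<in> Lk k" if "Lk_state k w = Lk_state k w'" "w \<in> Lk k" for w w'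
    using that Lk_state_eq_imp_window_sigs_eq in_Lk_iff_window_sigs by metis
qed (use length_Lk_state_le assms in blast)

lemma V_Lk_le_log:
  assumes "1 \<le> n"
  shows "\<exists>m. V {0..k} (Lk k) n = enat m \<and>
    real m \<le> (2 ^ (k + 3) * (real k + 3) + 1) * real_of_int \<lfloor>log 2 (real n)\<rfloor>
      + real ((2 ^ (k + 2) + k) * (2 * k + 5))"
proof -
  define B :: nat where "B = 2 ^ (k + 2) + k"
  define e where "e = nat \<lfloor>log 2 (real n)\<rfloor>"
  define x :: real where "x = 2 ^ (k + 2)"
  have "1 \<le> x"
    unfolding x_def by (rule one_le_power) simp
  then have "real k \<le> x * real k"
    using mult_right_mono[of 1 x "real k"] by simp
  moreover have "real (2 * B) = 2 * (x + real k)"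
    unfolding B_def x_def by simp
  ultimately have "real (2 * B) \<le> 2 * x * (real k + 3) + 1"
    using \<open>1 \<le> x\<close> by (simp add: algebra_simps)
  also have "2 * x = 2 ^ (k + 3)"
    unfolding x_def by (simp add: power_add)
  finally have coeff: "real (2 * B) \<le> 2 ^ (k + 3) * (real k + 3) + 1" .
  have V: "V {0..k} (Lk k) n \<le> enat (B * (2 * e + 2 * k + 5))"
    unfolding B_def e_def by (rule V_Lk_le[OF assms])
  then obtain m where m: "V {0..k} (Lk k) n = enat m"
    using enat_ile by blast
  with V have "m \<le> 2 * B * e + B * (2 * k + 5)"
    by (simp add: algebra_simps)
  then have "real m \<le> real (2 * B) * real e + real (B * (2 * k + 5))"
    by (metis of_nat_add of_nat_le_iff of_nat_mult)
  also have "\<dots> \<le> (2 ^ (k + 3) * (real k + 3) + 1) * real e + real (B * (2 * k + 5))"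
    using coeff by (simp add: mult_right_mono)
  also have "real e = real_of_int \<lfloor>log 2 (real n)\<rfloor>"
    using assms unfolding e_def by simp
  finally show ?thesis
    using m(1) unfolding B_def by blast
qed

theorem lemma5p13:
  shows "(\<forall>k x. alt (Lk k) x \<le> 2 ^ (k + 2) - 2) \<and>
         (\<forall>k. \<exists>c :: real. \<forall>\<^sub>F n in sequentially.
            \<exists>m :: nat. V {0..k} (Lk k) n = enat m \<and>
              real m \<le> (2 ^ (k + 3) * (real k + 3) + 1) * real_of_int \<lfloor>log 2 (real n)\<rfloor> + c)"
proof (intro conjI allI exI)
  fix k
  show "\<forall>\<^sub>F n in sequentially. \<exists>m. V {0..k} (Lk k) n = enat m \<and>
      real m \<le> (2 ^ (k + 3) * (real k + 3) + 1) * real_of_int \<lfloor>log 2 (real n)\<rfloor>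
        + real ((2 ^ (k + 2) + k) * (2 * k + 5))"
    using V_Lk_le_log by (intro eventually_sequentiallyI)
qed (rule alt_Lk_le)

end
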